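(* Let $S\subseteq\mathcal{S}_d$ be nonempty, $[d]$ partitioned into groups $G_1,\dots,G_g$, $\bar\alpha,\bar\beta\in[0,1]^g$, $k\in[d]$, and assume an $(\bar\alpha,\bar\beta)$-$k$-fair ranking in $\mathcal S_d$ exists. Let $\tau$ be an $(\bar\alpha,\bar\beta)$-$k$-fair top-$k$ ranking minimizing $2\sum_{\pi\in S}\sum_{i\in D_\tau}(\pi(i)-\tau(i))\mathbb{1}[\tau(i)<\pi(i)]$, and let $\sigma\in\mathcal S_d$ be a ranking with $\sigma(a)=\tau(a)$ for all $a\in D_\tau$ that minimizes $2\sum_{\pi\in S}\sum_{i\in[d]}(\pi(i)-\sigma(i))\mathbb{1}[\sigma(i)<\pi(i)]$ among all such extensions. Let $\sigma^*$ be any $(\bar\alpha,\bar\beta)$-$k$-fair ranking in $\mathcal S_d$ minimizing $\mathrm{Obj}$, let $\mathrm{OPT}=\mathrm{Obj}(\sigma^* )$, and let $L^*=\{a\in[d]:\sigma^*(a)\le k\}$. Then $\mathrm{Obj}(\sigma)\le\overleftarrow{\mathrm{Obj}}(\sigma^*_{L^*})+\mathrm{OPT}$.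
   Context: $\mathcal{S}_d$ is the set of rankings of $[d]$, $\pi(a)$ the rank of $a$. A top-$k$ ranking is a bijection $\tau:D_\tau\to[k]$, $D_\tau\subseteq[d]$. A full or top-$k$ ranking is $(\bar\alpha,\bar\beta)$-$k$-fair if for every $i\in[g]$ the candidates at positions $1,\dots,k$ include at least $\lfloor\alpha_i k\rfloor$ and at most $\lceil\beta_i k\rceil$ members of $G_i$. For $\pi,\sigma\in\mathcal S_d$, $F(\pi,\sigma)=\sum_{i\in[d]}|\pi(i)-\sigma(i)|$ and $\mathrm{Obj}(\sigma)=\sum_{\pi\in S}F(\pi,\sigma)$. For $\sigma\in\mathcal S_d$ and $D\subseteq[d]$, $\overleftarrow{\mathrm{Obj}}(\sigma_D):=2\sum_{\pi\in S}\sum_{i\in D}(\pi(i)-\sigma(i))\mathbb{1}[\sigma(i)<\pi(i)]$. *)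

theory Defs
  imports Complex_Main "HOL-Combinatorics.Permutations"
begin

text \<open>A (full) ranking of [d] = {1..d}: a bijection of {1..d}; pi a is the rank of a.
  We normalise to the identity outside {1..d}.\<close>
definition ranking :: "nat \<Rightarrow> (nat \<Rightarrow> nat) \<Rightarrow> bool" where
  "ranking d \<pi> \<longleftrightarrow> \<pi> permutes {1..d}"

definition topk_ranking :: "nat \<Rightarrow> nat \<Rightarrow> nat set \<Rightarrow> (nat \<Rightarrow> nat) \<Rightarrow> bool" where
  "topk_ranking d k D \<tau> \<longleftrightarrow> D \<subseteq> {1..d} \<and> bij_betw \<tau> D {1..k}"

definition is_partition :: "nat \<Rightarrow> nat \<Rightarrow> (nat \<Rightarrow> nat set) \<Rightarrow> bool" where
  "is_partition d g G \<longleftrightarrow>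
     (\<forall>i\<in>{1..g}. G i \<noteq> {}) \<and>
     (\<forall>i\<in>{1..g}. \<forall>j\<in>{1..g}. i \<noteq> j \<longrightarrow> G i \<inter> G j = {}) \<and>
     (\<Union>i\<in>{1..g}. G i) = {1..d}"

definition fair_full ::
  "nat \<Rightarrow> (nat \<Rightarrow> nat set) \<Rightarrow> (nat \<Rightarrow> real) \<Rightarrow> (nat \<Rightarrow> real) \<Rightarrow> nat \<Rightarrow> (nat \<Rightarrow> nat) \<Rightarrow> bool" where
  "fair_full g G \<alpha> \<beta> k \<sigma> \<longleftrightarrow>
     (\<forall>i\<in>{1..g}. \<lfloor>\<alpha> i * real k\<rfloor> \<le> int (card {a \<in> G i. \<sigma> a \<le> k}) \<and>
                 int (card {a \<in> G i. \<sigma> a \<le> k}) \<le> \<lceil>\<beta> i * real k\<rceil>)"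

definition fair_topk ::
  "nat \<Rightarrow> (nat \<Rightarrow> nat set) \<Rightarrow> (nat \<Rightarrow> real) \<Rightarrow> (nat \<Rightarrow> real) \<Rightarrow> nat \<Rightarrow> nat set \<Rightarrow> (nat \<Rightarrow> nat) \<Rightarrow> bool" where
  "fair_topk g G \<alpha> \<beta> k D \<tau> \<longleftrightarrow>
     (\<forall>i\<in>{1..g}. \<lfloor>\<alpha> i * real k\<rfloor> \<le> int (card {a \<in> G i \<inter> D. \<tau> a \<le> k}) \<and>
                 int (card {a \<in> G i \<inter> D. \<tau> a \<le> k}) \<le> \<lceil>\<beta> i * real k\<rceil>)"

definition footrule :: "nat \<Rightarrow> (nat \<Rightarrow> nat) \<Rightarrow> (nat \<Rightarrow> nat) \<Rightarrow> int" where
  "footrule d \<pi> \<sigma> = (\<Sum>i\<in>{1..d}. \<bar>int (\<pi> i) - int (\<sigma> i)\<bar>)"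

definition Obj :: "nat \<Rightarrow> (nat \<Rightarrow> nat) set \<Rightarrow> (nat \<Rightarrow> nat) \<Rightarrow> int" where
  "Obj d S \<sigma> = (\<Sum>\<pi>\<in>S. footrule d \<pi> \<sigma>)"

definition ObjL :: "(nat \<Rightarrow> nat) set \<Rightarrow> nat set \<Rightarrow> (nat \<Rightarrow> nat) \<Rightarrow> int" where
  "ObjL S D \<sigma> = 2 * (\<Sum>\<pi>\<in>S. \<Sum>i\<in>D.
      (int (\<pi> i) - int (\<sigma> i)) * (if \<sigma> i < \<pi> i then 1 else 0))"

end

theory Submission
  imports Defs
begin

text \<open>Since two rankings of [d] have the same rank sum, the footrule distance is twice the
  total amount by which the second ranking places candidates ahead of the first; hence Obj
  coincides with the backward objective on all of [d], which is additive in the candidate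
  set, monotone in it, and antitone in the ranks. Let L be the top-k set of the fair optimum
  sigma*. Extend tau to a full ranking rho by giving the candidates outside D the ranks
  k+1..d so that none of them is ranked ahead of its sigma*-position: those outside L keep
  their sigma*-rank, and those in L - D take over the sigma*-ranks of D - L. By the choice
  of sigma, Obj(sigma) is at most the backward objective of rho on [d]. This splits into the
  part on D, which by the optimality of tau is at most the backward objective of sigma* on L
  (a fair top-k ranking), and the part outside D, which is at most that of sigma*, i.e. OPT.\<close>

lemma footrule_eq_twice_positive_part:
  assumes "ranking d \<pi>" "ranking d \<rho>"
  shows "footrule d \<pi> \<rho> =
    2 * (\<Sum>i\<in>{1..d}. (int (\<pi> i) - int (\<rho> i)) * (if \<rho> i < \<pi> i then 1 else 0))"
proof -
  have "(\<Sum>i\<in>{1..d}. int (p i)) = (\<Sum>i\<in>{1..d}. int i)" if "ranking d p" for p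
    using sum.permute[of p "{1..d}" int] that by (simp add: ranking_def comp_def)
  then have rank_sums_cancel: "(\<Sum>i\<in>{1..d}. int (\<pi> i) - int (\<rho> i)) = 0"
    using assms by (simp add: sum_subtractf)
  have "footrule d \<pi> \<rho> = (\<Sum>i\<in>{1..d}.
      2 * ((int (\<pi> i) - int (\<rho> i)) * (if \<rho> i < \<pi> i then 1 else 0)) - (int (\<pi> i) - int (\<rho> i)))"
    unfolding footrule_def by (rule sum.cong) auto
  also have "\<dots> = 2 * (\<Sum>i\<in>{1..d}. (int (\<pi> i) - int (\<rho> i)) * (if \<rho> i < \<pi> i then 1 else 0))"
    using rank_sums_cancel by (simp add: sum_subtractf sum_distrib_left)
  finally show ?thesis .
qed

lemma Obj_eq_ObjL:
  assumes "\<forall>\<pi>\<in>S. ranking d \<pi>" "ranking d \<rho>"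
  shows "Obj d S \<rho> = ObjL S {1..d} \<rho>"
  unfolding Obj_def ObjL_def sum_distrib_left
  using assms by (intro sum.cong) (simp_all add: footrule_eq_twice_positive_part sum_distrib_left)

lemma ObjL_union:
  assumes "finite A" "finite B" "A \<inter> B = {}"
  shows "ObjL S (A \<union> B) \<rho> = ObjL S A \<rho> + ObjL S B \<rho>"
  unfolding ObjL_def using assms by (simp add: sum.union_disjoint sum.distrib distrib_left)

lemma ObjL_cong:
  assumes "\<forall>a\<in>A. \<rho> a = \<tau> a"
  shows "ObjL S A \<rho> = ObjL S A \<tau>"
  unfolding ObjL_def using assms by simp

lemma ObjL_mono_set:
  assumes "A \<subseteq> B" "finite B"
  shows "ObjL S A \<rho> \<le> ObjL S B \<rho>"
  unfolding ObjL_def using assms by (auto intro!: sum_mono sum_mono2)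

lemma ObjL_antimono:
  assumes "\<forall>a\<in>A. \<sigma> a \<le> \<rho> a"
  shows "ObjL S A \<rho> \<le> ObjL S A \<sigma>"
  unfolding ObjL_def using assms by (auto intro!: sum_mono)

lemma bij_betw_ranks_le:
  assumes "ranking d \<sigma>" "k \<le> d"
  shows "bij_betw \<sigma> {a\<in>{1..d}. \<sigma> a \<le> k} {1..k}"
    and "bij_betw \<sigma> ({1..d} - {a\<in>{1..d}. \<sigma> a \<le> k}) {k<..d}"
proof -
  have \<sigma>_bij: "bij_betw \<sigma> {1..d} {1..d}"
    using assms(1) by (simp add: ranking_def permutes_imp_bij)
  have "bij_betw \<sigma> {a\<in>{1..d}. \<sigma> a \<le> k} {y\<in>{1..d}. y \<le> k}"
    using \<sigma>_bij by (rule bij_betw_Collect) simp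
  moreover have "{y\<in>{1..d}. y \<le> k} = {1..k}"
    using assms(2) by auto
  ultimately show "bij_betw \<sigma> {a\<in>{1..d}. \<sigma> a \<le> k} {1..k}"
    by simp
  have "bij_betw \<sigma> {a\<in>{1..d}. \<not> \<sigma> a \<le> k} {y\<in>{1..d}. \<not> y \<le> k}"
    using \<sigma>_bij by (rule bij_betw_Collect) simp
  moreover have "{y\<in>{1..d}. \<not> y \<le> k} = {k<..d}"
    "{a\<in>{1..d}. \<not> \<sigma> a \<le> k} = {1..d} - {a\<in>{1..d}. \<sigma> a \<le> k}"
    by auto
  ultimately show "bij_betw \<sigma> ({1..d} - {a\<in>{1..d}. \<sigma> a \<le> k}) {k<..d}"
    by simp
qed

lemma topk_ranking_of_ranking:
  assumes "ranking d \<sigma>" "k \<le> d"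
  shows "topk_ranking d k {a\<in>{1..d}. \<sigma> a \<le> k} \<sigma>"
  using bij_betw_ranks_le(1)[OF assms] by (auto simp: topk_ranking_def)

lemma fair_topk_of_fair_full:
  assumes "is_partition d g G" "fair_full g G \<alpha> \<beta> k \<sigma>"
  shows "fair_topk g G \<alpha> \<beta> k {a\<in>{1..d}. \<sigma> a \<le> k} \<sigma>"
proof -
  have "{a \<in> G i \<inter> {a\<in>{1..d}. \<sigma> a \<le> k}. \<sigma> a \<le> k} = {a \<in> G i. \<sigma> a \<le> k}"
    if "i \<in> {1..g}" for i
    using assms(1) that by (auto simp: is_partition_def)
  then show ?thesis
    using assms(2) by (simp add: fair_topk_def fair_full_def)
qed

lemma topk_ranking_card:
  assumes "topk_ranking d k D \<tau>"
  shows "card D = k" and "k \<le> d"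
proof -
  have D_sub: "D \<subseteq> {1..d}" and \<tau>_bij: "bij_betw \<tau> D {1..k}"
    using assms by (auto simp: topk_ranking_def)
  show "card D = k"
    using bij_betw_same_card[OF \<tau>_bij] by simp
  then show "k \<le> d"
    using D_sub card_mono[of "{1..d}" D] by simp
qed

lemma exists_bij_betw_Diff_fixing_common:
  assumes "finite U" "D \<subseteq> U" "L \<subseteq> U" "card D = card L"
  obtains h where "bij_betw h (U - D) (U - L)" "\<forall>x\<in>U - D - L. h x = x"
proof -
  have fin: "finite D" "finite L"
    using assms(1-3) finite_subset by auto
  then have "card (L - D) = card (D - L)"
    using assms(4) card_Diff_subset_Int[of L D] card_Diff_subset_Int[of D L]
    by (simp add: Int_commute)
  then obtain f where f: "bij_betw f (L - D) (D - L)"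
    using fin finite_same_card_bij[of "L - D" "D - L"] by blast
  define h where "h x = (if x \<in> L then f x else x)" for x
  have "bij_betw h (L - D) (D - L)"
    using f by (rule bij_betw_cong[THEN iffD1, rotated]) (simp add: h_def)
  moreover have "bij_betw h (U - D - L) (U - D - L)"
    by (rule bij_betw_cong[THEN iffD1, of _ id]) (auto simp: h_def)
  ultimately have "bij_betw h ((L - D) \<union> (U - D - L)) ((D - L) \<union> (U - D - L))"
    by (rule bij_betw_combine) blast
  moreover have "(L - D) \<union> (U - D - L) = U - D" "(D - L) \<union> (U - D - L) = U - L"
    using assms(2,3) by auto
  moreover have "\<forall>x\<in>U - D - L. h x = x"
    by (simp add: h_def)
  ultimately show ?thesis
    using that by simp
qed

lemma ranking_extend_topk:
  assumes "topk_ranking d k D \<tau>" "bij_betw f ({1..d} - D) {k<..d}"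
  shows "ranking d (\<lambda>x. if x \<in> D then \<tau> x else if x \<in> {1..d} then f x else x)"
    (is "ranking d ?\<rho>")
proof -
  have D_sub: "D \<subseteq> {1..d}" and \<tau>_bij: "bij_betw \<tau> D {1..k}"
    using assms(1) by (auto simp: topk_ranking_def)
  have "k \<le> d"
    using topk_ranking_card(2)[OF assms(1)] .
  have "bij_betw ?\<rho> D {1..k}"
    using \<tau>_bij by (rule bij_betw_cong[THEN iffD1, rotated]) simp
  moreover have "bij_betw ?\<rho> ({1..d} - D) {k<..d}"
    using assms(2) by (rule bij_betw_cong[THEN iffD1, rotated]) simp
  ultimately have "bij_betw ?\<rho> (D \<union> ({1..d} - D)) ({1..k} \<union> {k<..d})"
    by (rule bij_betw_combine) auto
  moreover have "D \<union> ({1..d} - D) = {1..d}" "{1..k} \<union> {k<..d} = {1..d}"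
    using D_sub \<open>k \<le> d\<close> by auto
  ultimately have "bij_betw ?\<rho> {1..d} {1..d}"
    by simp
  then show ?thesis
    unfolding ranking_def by (rule bij_imp_permutes) (use D_sub in auto)
qed

lemma exists_ranking_extending_topk_ge:
  assumes "topk_ranking d k D \<tau>" "ranking d \<sigma>"
  obtains \<rho> where "ranking d \<rho>" "\<forall>a\<in>D. \<rho> a = \<tau> a" "\<forall>a\<in>{1..d} - D. \<sigma> a \<le> \<rho> a"
proof -
  define L where "L = {a\<in>{1..d}. \<sigma> a \<le> k}"
  have D_sub: "D \<subseteq> {1..d}"
    using assms(1) by (simp add: topk_ranking_def)
  note card_D = topk_ranking_card(1)[OF assms(1)]
    and k_le_d = topk_ranking_card(2)[OF assms(1)]
  have "card L = k"
    using bij_betw_same_card[OF bij_betw_ranks_le(1)[OF assms(2) k_le_d]] by (simp add: L_def)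
  moreover have "L \<subseteq> {1..d}"
    by (auto simp: L_def)
  ultimately obtain h
    where h: "bij_betw h ({1..d} - D) ({1..d} - L)" "\<forall>x\<in>{1..d} - D - L. h x = x"
    using exists_bij_betw_Diff_fixing_common[of "{1..d}" D L] D_sub card_D
    by auto
  have \<sigma>h: "bij_betw (\<sigma> \<circ> h) ({1..d} - D) {k<..d}"
    using bij_betw_trans[OF h(1) bij_betw_ranks_le(2)[OF assms(2) k_le_d, folded L_def]] .
  define \<rho> where "\<rho> x = (if x \<in> D then \<tau> x else if x \<in> {1..d} then (\<sigma> \<circ> h) x else x)" for x
  have "ranking d \<rho>"
    unfolding \<rho>_def using ranking_extend_topk[OF assms(1) \<sigma>h] .
  moreover have "\<sigma> a \<le> \<rho> a" if a: "a \<in> {1..d} - D" for a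
  proof (cases "a \<in> L")
    case True
    then show ?thesis
      using a bij_betwE[OF \<sigma>h] by (force simp: \<rho>_def L_def)
  next
    case False
    then show ?thesis
      using a h(2) by (simp add: \<rho>_def)
  qed
  ultimately show ?thesis
    using that by (simp add: \<rho>_def)
qed

theorem lemma4p4:
  fixes d g k :: nat and S :: "(nat \<Rightarrow> nat) set" and G :: "nat \<Rightarrow> nat set"
    and \<alpha> \<beta> :: "nat \<Rightarrow> real" and D :: "nat set" and \<tau> \<sigma> \<sigma>s :: "nat \<Rightarrow> nat"
  assumes S_rank: "\<forall>\<pi>\<in>S. ranking d \<pi>" and S_ne: "S \<noteq> {}"
    and part: "is_partition d g G"
    and \<alpha>_range: "\<forall>i\<in>{1..g}. 0 \<le> \<alpha> i \<and> \<alpha> i \<le> 1"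
    and \<beta>_range: "\<forall>i\<in>{1..g}. 0 \<le> \<beta> i \<and> \<beta> i \<le> 1"
    and k_range: "1 \<le> k" "k \<le> d"
    and fair_exists: "\<exists>\<rho>. ranking d \<rho> \<and> fair_full g G \<alpha> \<beta> k \<rho>"
    and \<tau>_topk: "topk_ranking d k D \<tau>" and \<tau>_fair: "fair_topk g G \<alpha> \<beta> k D \<tau>"
    and \<tau>_min: "\<forall>D' \<tau>'. topk_ranking d k D' \<tau>' \<and> fair_topk g G \<alpha> \<beta> k D' \<tau>'
                    \<longrightarrow> ObjL S D \<tau> \<le> ObjL S D' \<tau>'"
    and \<sigma>_rank: "ranking d \<sigma>" and \<sigma>_ext: "\<forall>a\<in>D. \<sigma> a = \<tau> a"
    and \<sigma>_min: "\<forall>\<rho>. ranking d \<rho> \<and> (\<forall>a\<in>D. \<rho> a = \<tau> a)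
                    \<longrightarrow> ObjL S {1..d} \<sigma> \<le> ObjL S {1..d} \<rho>"
    and \<sigma>s_rank: "ranking d \<sigma>s" and \<sigma>s_fair: "fair_full g G \<alpha> \<beta> k \<sigma>s"
    and \<sigma>s_min: "\<forall>\<rho>. ranking d \<rho> \<and> fair_full g G \<alpha> \<beta> k \<rho> \<longrightarrow> Obj d S \<sigma>s \<le> Obj d S \<rho>"
  shows "Obj d S \<sigma> \<le> ObjL S {a \<in> {1..d}. \<sigma>s a \<le> k} \<sigma>s + Obj d S \<sigma>s"
proof -
  obtain \<rho> where \<rho>: "ranking d \<rho>" "\<forall>a\<in>D. \<rho> a = \<tau> a" "\<forall>a\<in>{1..d} - D. \<sigma>s a \<le> \<rho> a"
    using exists_ranking_extending_topk_ge[OF \<tau>_topk \<sigma>s_rank] .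
  have D_sub: "D \<subseteq> {1..d}"
    using \<tau>_topk by (simp add: topk_ranking_def)
  have on_D: "ObjL S D \<rho> \<le> ObjL S {a \<in> {1..d}. \<sigma>s a \<le> k} \<sigma>s"
    using ObjL_cong[OF \<rho>(2)] \<tau>_min topk_ranking_of_ranking[OF \<sigma>s_rank k_range(2)]
      fair_topk_of_fair_full[OF part \<sigma>s_fair] by (metis (no_types, lifting))
  have off_D: "ObjL S ({1..d} - D) \<rho> \<le> Obj d S \<sigma>s"
  proof -
    have "ObjL S ({1..d} - D) \<rho> \<le> ObjL S ({1..d} - D) \<sigma>s"
      using ObjL_antimono[OF \<rho>(3)] .
    also have "\<dots> \<le> ObjL S {1..d} \<sigma>s"
      by (rule ObjL_mono_set) auto
    also have "\<dots> = Obj d S \<sigma>s"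
      using Obj_eq_ObjL[OF S_rank \<sigma>s_rank] by simp
    finally show ?thesis .
  qed
  have "Obj d S \<sigma> = ObjL S {1..d} \<sigma>"
    using Obj_eq_ObjL[OF S_rank \<sigma>_rank] .
  also have "\<dots> \<le> ObjL S {1..d} \<rho>"
    using \<sigma>_min \<rho>(1,2) by blast
  also have "\<dots> = ObjL S (D \<union> ({1..d} - D)) \<rho>"
    using D_sub by (simp add: Un_absorb1)
  also have "\<dots> = ObjL S D \<rho> + ObjL S ({1..d} - D) \<rho>"
    by (rule ObjL_union) (use D_sub finite_subset in auto)
  finally show ?thesis
    using on_D off_D by linarith
qed

end
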